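(* Let $G=G_1\times G_2$ be a product of commutative groups, $V_1\subset G_1$, $V_2\subset G_2$ finite sets, $U=V_1\times V_2$, and $1<p<\infty$. Then $\beta_p(U)=\beta_p(V_1)\beta_p(V_2)$, where $\beta_p(U)$ is computed in $G$ and $\beta_p(V_i)$ in $G_i$.
   Context: For a finite set $U$ in a commutative group $K$ and $1<p<\infty$, $\beta_p(U)=\inf_{A,B}\frac{|A+B+U|}{|A|^{1/p}|B|^{1-1/p}}$, the infimum over all nonempty finite $A,B\subset K$. *)

theory Defs
  imports Complex_Main "HOL-Library.Product_Plus"
begin

definition sumset :: "'a::ab_group_add set \<Rightarrow> 'a set \<Rightarrow> 'a set" where
  "sumset A B = {a + b | a b. a \<in> A \<and> b \<in> B}"

definition beta :: "real \<Rightarrow> 'a::ab_group_add set \<Rightarrow> real" where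
  "beta p U = Inf {real (card (sumset (sumset A B) U)) /
                    (real (card A) powr (1 / p) * real (card B) powr (1 - 1 / p)) | A B.
                   finite A \<and> A \<noteq> {} \<and> finite B \<and> B \<noteq> {}}"

end

theory Submission
  imports Defs "HOL-Analysis.Convex"
begin

text \<open>
  Product sets give \<open>\<beta>(V\<^sub>1 \<times> V\<^sub>2) \<le> \<beta>(V\<^sub>1) \<beta>(V\<^sub>2)\<close>: the sumset ratio of
  \<open>A\<^sub>1 \<times> A\<^sub>2\<close>, \<open>B\<^sub>1 \<times> B\<^sub>2\<close> is the product of the ratios of the factors.

  For the converse, slice \<open>A\<close>, \<open>B\<close> and \<open>C = A + B + V\<^sub>1 \<times> V\<^sub>2\<close> into fibres over \<open>G\<^sub>2\<close>.
  Since \<open>A\<^sub>s + B\<^sub>t + V\<^sub>1\<close> lies in the fibre of \<open>C\<close> over \<open>s + t + v\<close> for \<open>v \<in> V\<^sub>2\<close>, the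
  weights \<open>a(s) = \<beta>(V\<^sub>1) |A\<^sub>s|\<close>, \<open>b(t) = \<beta>(V\<^sub>1) |B\<^sub>t|\<close>, \<open>h(y) = |C\<^sub>y|\<close> satisfy
  \<open>a(s)^(1/p) b(t)^(1-1/p) \<le> h(s + t + v)\<close>. A weighted form of the definition of \<open>\<beta>(V\<^sub>2)\<close>,
  \<open>\<beta>(V\<^sub>2) (\<Sum>a)^(1/p) (\<Sum>b)^(1-1/p) \<le> \<Sum>h\<close>, then gives the claim. That weighted form is
  proved by peeling off layers: lower \<open>a\<close> on all of \<open>S\<close> and \<open>b\<close> on all of \<open>T\<close> by constants
  proportional to their averages, as far as positivity allows. The removed layer is an unweighted
  configuration \<open>S\<close>, \<open>T\<close>, \<open>S + T + V\<close>, the remaining sums shrink by a common factor, and the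
  superadditivity of the geometric mean \<open>x^(1/p) y^(1-1/p)\<close> preserves the hypothesis.
\<close>

definition geom_mean :: "real \<Rightarrow> real \<Rightarrow> real \<Rightarrow> real" where
  "geom_mean t x y = x powr t * y powr (1 - t)"

lemma geom_mean_nonneg: "0 \<le> geom_mean t x y"
  by (simp add: geom_mean_def)

lemma geom_mean_pos: "0 < x \<Longrightarrow> 0 < y \<Longrightarrow> 0 < geom_mean t x y"
  by (simp add: geom_mean_def)

lemma geom_mean_same: "0 \<le> x \<Longrightarrow> geom_mean t x x = x"
  by (cases "x = 0") (simp_all add: geom_mean_def flip: powr_add)

lemma geom_mean_mult:
  "geom_mean t (x1 * x2) (y1 * y2) = geom_mean t x1 y1 * geom_mean t x2 y2"
  by (simp add: geom_mean_def powr_mult mult_ac)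

lemma geom_mean_scale: "0 \<le> k \<Longrightarrow> geom_mean t (k * x) (k * y) = k * geom_mean t x y"
  by (simp add: geom_mean_mult geom_mean_same)

lemma geom_mean_le_arith_mean:
  assumes "0 < t" "t < 1" "0 \<le> x" "0 \<le> y"
  shows "geom_mean t x y \<le> t * x + (1 - t) * y"
proof (cases "x = 0 \<or> y = 0")
  case True
  then show ?thesis using assms by (auto simp: geom_mean_def)
next
  case False
  then show ?thesis
    using Youngs_inequality_0[of t "1 - t" x y] assms by (simp add: geom_mean_def)
qed

lemma geom_mean_superadditive:
  assumes "0 < t" "t < 1" "0 \<le> x1" "0 \<le> x2" "0 \<le> y1" "0 \<le> y2"
  shows "geom_mean t x1 y1 + geom_mean t x2 y2 \<le> geom_mean t (x1 + x2) (y1 + y2)"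
proof (cases "x1 + x2 = 0 \<or> y1 + y2 = 0")
  case True
  then have "(x1 = 0 \<and> x2 = 0) \<or> (y1 = 0 \<and> y2 = 0)" using assms by auto
  then show ?thesis using assms by (auto simp: geom_mean_def)
next
  case False
  define X Y where "X = x1 + x2" and "Y = y1 + y2"
  have XY: "0 < X" "0 < Y" using False assms by (auto simp: X_def Y_def)
  have termwise: "geom_mean t x y \<le> geom_mean t X Y * (t * (x / X) + (1 - t) * (y / Y))"
    if "0 \<le> x" "0 \<le> y" for x y
  proof -
    have "geom_mean t x y = geom_mean t X Y * geom_mean t (x / X) (y / Y)"
      using XY by (simp flip: geom_mean_mult)
    also have "\<dots> \<le> geom_mean t X Y * (t * (x / X) + (1 - t) * (y / Y))"
      using XY that assms
      by (intro mult_left_mono geom_mean_le_arith_mean geom_mean_nonneg) auto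
    finally show ?thesis .
  qed
  have "geom_mean t x1 y1 + geom_mean t x2 y2
      \<le> geom_mean t X Y * (t * ((x1 + x2) / X) + (1 - t) * ((y1 + y2) / Y))"
    using termwise[of x1 y1] termwise[of x2 y2] assms
    by (simp add: algebra_simps add_divide_distrib)
  also have "\<dots> = geom_mean t X Y"
    using XY by (simp add: X_def Y_def)
  finally show ?thesis by (simp add: X_def Y_def)
qed

lemma geom_mean_diff_add_le:
  assumes "0 < t" "t < 1" "0 \<le> \<alpha>" "\<alpha> \<le> x" "0 \<le> \<beta>" "\<beta> \<le> y"
  shows "geom_mean t (x - \<alpha>) (y - \<beta>) + geom_mean t \<alpha> \<beta> \<le> geom_mean t x y"
  using geom_mean_superadditive[of t "x - \<alpha>" \<alpha> "y - \<beta>" \<beta>] assms by simp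

lemma sumset_iff: "z \<in> sumset A B \<longleftrightarrow> (\<exists>a\<in>A. \<exists>b\<in>B. z = a + b)"
  unfolding sumset_def by blast

lemma sumset_sumset_iff:
  "z \<in> sumset (sumset A B) C \<longleftrightarrow> (\<exists>a\<in>A. \<exists>b\<in>B. \<exists>c\<in>C. z = a + b + c)"
  by (force simp: sumset_iff)

lemma finite_sumset:
  assumes "finite A" "finite B"
  shows "finite (sumset A B)"
proof -
  have "sumset A B = (\<lambda>(a, b). a + b) ` (A \<times> B)"
    unfolding sumset_def by force
  then show ?thesis using assms by simp
qed

lemma sumset_mono: "A \<subseteq> A' \<Longrightarrow> B \<subseteq> B' \<Longrightarrow> sumset A B \<subseteq> sumset A' B'"
  unfolding sumset_def by blast

lemma sumset_Times: "sumset (A1 \<times> A2) (B1 \<times> B2) = sumset A1 B1 \<times> sumset A2 B2"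
  unfolding sumset_def by force

definition sumset_ratios :: "real \<Rightarrow> 'a::ab_group_add set \<Rightarrow> real set" where
  "sumset_ratios p U = {real (card (sumset (sumset A B) U)) / geom_mean (1 / p) (card A) (card B)
     | A B. finite A \<and> A \<noteq> {} \<and> finite B \<and> B \<noteq> {}}"

lemma beta_eq_Inf_sumset_ratios: "beta p U = Inf (sumset_ratios p U)"
  unfolding beta_def sumset_ratios_def geom_mean_def ..

lemma sumset_ratios_nonneg: "x \<in> sumset_ratios p U \<Longrightarrow> 0 \<le> x"
  unfolding sumset_ratios_def using geom_mean_nonneg by fastforce

lemma sumset_ratios_nonempty: "sumset_ratios p U \<noteq> {}"
proof -
  have "finite {0}" "{0} \<noteq> {}" by auto
  then show ?thesis unfolding sumset_ratios_def by blast
qed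

lemma bdd_below_sumset_ratios: "bdd_below (sumset_ratios p U)"
  using sumset_ratios_nonneg by (rule bdd_belowI)

lemma beta_mult_geom_mean_le_card:
  assumes "finite A" "A \<noteq> {}" "finite B" "B \<noteq> {}"
  shows "beta p U * geom_mean (1 / p) (card A) (card B) \<le> card (sumset (sumset A B) U)"
proof -
  have "beta p U \<le> card (sumset (sumset A B) U) / geom_mean (1 / p) (card A) (card B)"
    unfolding beta_eq_Inf_sumset_ratios using assms
    by (intro cInf_lower bdd_below_sumset_ratios) (auto simp: sumset_ratios_def)
  moreover have "0 < geom_mean (1 / p) (card A) (card B)"
    using assms by (simp add: geom_mean_pos card_gt_0_iff)
  ultimately show ?thesis by (simp add: pos_le_divide_eq)
qed

lemma le_betaI:
  assumes "\<And>A B. finite A \<Longrightarrow> A \<noteq> {} \<Longrightarrow> finite B \<Longrightarrow> B \<noteq> {} \<Longrightarrow>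
    c * geom_mean (1 / p) (card A) (card B) \<le> card (sumset (sumset A B) U)"
  shows "c \<le> beta p U"
  unfolding beta_eq_Inf_sumset_ratios
proof (rule cInf_greatest[OF sumset_ratios_nonempty])
  fix x assume "x \<in> sumset_ratios p U"
  then obtain A B where AB: "finite A" "A \<noteq> {}" "finite B" "B \<noteq> {}"
    and x: "x = card (sumset (sumset A B) U) / geom_mean (1 / p) (card A) (card B)"
    unfolding sumset_ratios_def by blast
  have "0 < geom_mean (1 / p) (card A) (card B)"
    using AB by (simp add: geom_mean_pos card_gt_0_iff)
  then show "c \<le> x" using assms[OF AB] by (simp add: x pos_le_divide_eq)
qed

lemma beta_nonneg: "0 \<le> beta p U"
  by (rule le_betaI) simp

lemma le_Inf_mult:
  fixes X Y :: "real set"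
  assumes "X \<noteq> {}" "Y \<noteq> {}" "\<And>x. x \<in> X \<Longrightarrow> 0 \<le> x" "\<And>y. y \<in> Y \<Longrightarrow> 0 \<le> y"
    and le: "\<And>x y. x \<in> X \<Longrightarrow> y \<in> Y \<Longrightarrow> c \<le> x * y"
  shows "c \<le> Inf X * Inf Y"
proof -
  have Inf_nonneg: "0 \<le> Inf X" "0 \<le> Inf Y"
    using assms(1-4) by (auto intro: cInf_greatest)
  show ?thesis
  proof (cases "c \<le> 0")
    case True
    then show ?thesis using Inf_nonneg by (simp add: order_trans[OF _ mult_nonneg_nonneg])
  next
    case False
    have "c \<le> Inf X * y" if "y \<in> Y" for y
    proof -
      obtain x where "x \<in> X" using assms(1) by blast
      then have "0 < y" using le[OF _ that] assms(3) assms(4)[OF that] False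
        by (cases "y = 0") (auto simp: less_le)
      have "c / y \<le> Inf X"
      proof (rule cInf_greatest[OF assms(1)])
        fix x assume "x \<in> X"
        then show "c / y \<le> x" using le[OF _ that] \<open>0 < y\<close> by (simp add: divide_le_eq)
      qed
      with \<open>0 < y\<close> show ?thesis by (simp add: divide_le_eq)
    qed
    moreover have "0 < Inf X"
    proof -
      obtain y where "y \<in> Y" using assms(2) by blast
      with calculation have "c \<le> Inf X * y" .
      with False Inf_nonneg show ?thesis by (cases "Inf X = 0") auto
    qed
    ultimately have "c / Inf X \<le> Inf Y"
      by (intro cInf_greatest[OF assms(2)]) (simp add: divide_le_eq mult.commute)
    with \<open>0 < Inf X\<close> show ?thesis by (simp add: divide_le_eq mult.commute)
  qed
qed

lemma beta_Times_le: "beta p (V1 \<times> V2) \<le> beta p V1 * beta p V2"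
  unfolding beta_eq_Inf_sumset_ratios
proof (rule le_Inf_mult[OF sumset_ratios_nonempty sumset_ratios_nonempty
      sumset_ratios_nonneg sumset_ratios_nonneg])
  fix x y assume "x \<in> sumset_ratios p V1" "y \<in> sumset_ratios p V2"
  then obtain A1 B1 A2 B2 where fin: "finite A1" "A1 \<noteq> {}" "finite B1" "B1 \<noteq> {}"
      "finite A2" "A2 \<noteq> {}" "finite B2" "B2 \<noteq> {}"
    and x: "x = card (sumset (sumset A1 B1) V1) / geom_mean (1 / p) (card A1) (card B1)"
    and y: "y = card (sumset (sumset A2 B2) V2) / geom_mean (1 / p) (card A2) (card B2)"
    unfolding sumset_ratios_def by blast
  have "x * y = card (sumset (sumset (A1 \<times> A2) (B1 \<times> B2)) (V1 \<times> V2))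
      / geom_mean (1 / p) (card (A1 \<times> A2)) (card (B1 \<times> B2))"
    by (simp add: x y sumset_Times card_cartesian_product geom_mean_mult)
  then have "x * y \<in> sumset_ratios p (V1 \<times> V2)"
    unfolding sumset_ratios_def using fin by blast
  then show "Inf (sumset_ratios p (V1 \<times> V2)) \<le> x * y"
    by (rule cInf_lower[OF _ bdd_below_sumset_ratios])
qed

lemma exists_balanced_layer:
  fixes a b :: "'c \<Rightarrow> real"
  assumes "finite S" "S \<noteq> {}" "finite T" "T \<noteq> {}" "\<forall>s\<in>S. 0 < a s" "\<forall>t\<in>T. 0 < b t"
  obtains c where "0 < c" "c \<le> 1"
    "\<forall>s\<in>S. c * sum a S / card S \<le> a s" "\<forall>t\<in>T. c * sum b T / card T \<le> b t"
    "card {s\<in>S. c * sum a S / card S < a s} + card {t\<in>T. c * sum b T / card T < b t}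
       < card S + card T"
proof -
  have pos: "0 < sum a S" "0 < sum b T" "0 < real (card S)" "0 < real (card T)"
    using assms by (auto intro: sum_pos simp: card_gt_0_iff)
  define ra rb where "ra s = a s * card S / sum a S" and "rb t = b t * card T / sum b T" for s t
  define c where "c = Min (ra ` S \<union> rb ` T)"
  have fin: "finite (ra ` S \<union> rb ` T)" and ne: "ra ` S \<union> rb ` T \<noteq> {}"
    using assms by auto
  define S' T' where "S' = {s\<in>S. c * sum a S / card S < a s}"
    and "T' = {t\<in>T. c * sum b T / card T < b t}"
  have level_iff: "c * sum a S / card S \<le> a s \<longleftrightarrow> c \<le> ra s"
    "c * sum b T / card T \<le> b t \<longleftrightarrow> c \<le> rb t" for s t
    using pos by (auto simp: ra_def rb_def field_simps)
  have lower: "\<forall>s\<in>S. c * sum a S / card S \<le> a s" "\<forall>t\<in>T. c * sum b T / card T \<le> b t"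
  proof -
    have "\<forall>s\<in>S. c \<le> ra s" "\<forall>t\<in>T. c \<le> rb t"
      unfolding c_def using fin by auto
    then show "\<forall>s\<in>S. c * sum a S / card S \<le> a s" "\<forall>t\<in>T. c * sum b T / card T \<le> b t"
      by (simp_all add: level_iff)
  qed
  have "c \<in> ra ` S \<union> rb ` T" unfolding c_def using fin ne by (rule Min_in)
  then have "(\<exists>s\<in>S. a s = c * sum a S / card S) \<or> (\<exists>t\<in>T. b t = c * sum b T / card T)"
    using pos by (auto simp: ra_def rb_def field_simps)
  then have "(\<exists>s\<in>S. s \<notin> S') \<or> (\<exists>t\<in>T. t \<notin> T')"
    unfolding S'_def T'_def by force
  moreover have "S' \<subseteq> S" "T' \<subseteq> T" by (auto simp: S'_def T'_def)
  ultimately have "S' \<subset> S \<or> T' \<subset> T" by blast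
  then have "card S' < card S \<or> card T' < card T"
    using assms(1,3) psubset_card_mono by blast
  moreover have "card S' \<le> card S" "card T' \<le> card T"
    using assms(1,3) by (auto simp: S'_def T'_def intro!: card_mono)
  ultimately have smaller: "card S' + card T' < card S + card T" by linarith
  have "0 < c"
    using \<open>c \<in> ra ` S \<union> rb ` T\<close> pos assms(5,6) by (auto simp: ra_def rb_def)
  moreover have "c \<le> 1"
  proof -
    have "(\<Sum>s\<in>S. c * sum a S / card S) \<le> sum a S"
      using lower(1) by (intro sum_mono) blast
    then show ?thesis using pos by simp
  qed
  ultimately show thesis using that lower smaller unfolding S'_def T'_def by blast
qed

lemma sum_above_scaled_mean:
  fixes a :: "'c \<Rightarrow> real"
  assumes "finite S" "S \<noteq> {}" "\<forall>s\<in>S. c * sum a S / card S \<le> a s"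
  shows "(\<Sum>s\<in>{s\<in>S. c * sum a S / card S < a s}. a s - c * sum a S / card S) = (1 - c) * sum a S"
proof -
  have "(\<Sum>s\<in>{s\<in>S. c * sum a S / card S < a s}. a s - c * sum a S / card S)
      = (\<Sum>s\<in>S. a s - c * sum a S / card S)"
    using assms(1,3) by (intro sum.mono_neutral_left) force+
  also have "\<dots> = (1 - c) * sum a S"
    using assms(1,2) by (simp add: sum_subtractf algebra_simps)
  finally show ?thesis .
qed

lemma sum_minus_indicator:
  fixes h :: "'c \<Rightarrow> real"
  assumes "finite Y" "Z \<subseteq> Y"
  shows "(\<Sum>y\<in>Y. h y - (if y \<in> Z then r else 0)) = sum h Y - r * card Z"
  using assms by (simp add: sum_subtractf sum.If_cases Int_absorb1)

lemma beta_const_weights_le: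
  fixes \<alpha> \<beta> :: real
  assumes "finite S" "S \<noteq> {}" "finite T" "T \<noteq> {}" "0 \<le> \<alpha>" "0 \<le> \<beta>"
  shows "beta p V * geom_mean (1 / p) (\<alpha> * card S) (\<beta> * card T)
    \<le> geom_mean (1 / p) \<alpha> \<beta> * card (sumset (sumset S T) V)"
proof -
  have "beta p V * geom_mean (1 / p) (\<alpha> * card S) (\<beta> * card T)
      = geom_mean (1 / p) \<alpha> \<beta> * (beta p V * geom_mean (1 / p) (card S) (card T))"
    by (simp add: geom_mean_mult mult_ac)
  also have "\<dots> \<le> geom_mean (1 / p) \<alpha> \<beta> * card (sumset (sumset S T) V)"
    using assms by (intro mult_left_mono beta_mult_geom_mean_le_card geom_mean_nonneg)
  finally show ?thesis .
qed

definition dominated_weights ::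
    "real \<Rightarrow> 'a::ab_group_add set \<Rightarrow> 'a set \<Rightarrow> ('a \<Rightarrow> real) \<Rightarrow> 'a set \<Rightarrow> ('a \<Rightarrow> real)
      \<Rightarrow> 'a set \<Rightarrow> ('a \<Rightarrow> real) \<Rightarrow> bool" where
  "dominated_weights p V S a T b Y h \<longleftrightarrow>
    finite S \<and> finite T \<and> sumset (sumset S T) V \<subseteq> Y \<and> (\<forall>y\<in>Y. 0 \<le> h y) \<and>
    (\<forall>s\<in>S. 0 < a s) \<and> (\<forall>t\<in>T. 0 < b t) \<and>
    (\<forall>s\<in>S. \<forall>t\<in>T. \<forall>v\<in>V. geom_mean (1 / p) (a s) (b t) \<le> h (s + t + v))"

lemma dominated_weights_remove_layer:
  fixes V Y :: "'a::ab_group_add set" and \<alpha> \<beta> :: real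
  assumes p: "1 < p" and dom: "dominated_weights p V S a T b Y h"
    and "0 \<le> \<alpha>" "0 \<le> \<beta>" and lower: "\<forall>s\<in>S. \<alpha> \<le> a s" "\<forall>t\<in>T. \<beta> \<le> b t"
  defines "h' \<equiv> \<lambda>y. h y - (if y \<in> sumset (sumset S T) V then geom_mean (1 / p) \<alpha> \<beta> else 0)"
  shows "dominated_weights p V {s\<in>S. \<alpha> < a s} (\<lambda>s. a s - \<alpha>) {t\<in>T. \<beta> < b t} (\<lambda>t. b t - \<beta>) Y h'"
proof -
  from dom have S_T: "finite S" "finite T" and Y: "sumset (sumset S T) V \<subseteq> Y"
    and h_nonneg: "\<forall>y\<in>Y. 0 \<le> h y"
    and le_h: "\<And>s t v. s \<in> S \<Longrightarrow> t \<in> T \<Longrightarrow> v \<in> V \<Longrightarrow>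
      geom_mean (1 / p) (a s) (b t) \<le> h (s + t + v)"
    unfolding dominated_weights_def by auto
  have layer: "geom_mean (1 / p) (a s - \<alpha>) (b t - \<beta>) + geom_mean (1 / p) \<alpha> \<beta> \<le> h (s + t + v)"
    if "s \<in> S" "t \<in> T" "v \<in> V" for s t v
  proof -
    have "geom_mean (1 / p) (a s - \<alpha>) (b t - \<beta>) + geom_mean (1 / p) \<alpha> \<beta>
        \<le> geom_mean (1 / p) (a s) (b t)"
      using p assms(3,4) lower that by (intro geom_mean_diff_add_le) auto
    also have "\<dots> \<le> h (s + t + v)" using le_h that by blast
    finally show ?thesis .
  qed
  show ?thesis
    unfolding dominated_weights_def
  proof (intro conjI ballI)
    show "finite {s\<in>S. \<alpha> < a s}" "finite {t\<in>T. \<beta> < b t}" using S_T by simp_all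
    show "sumset (sumset {s\<in>S. \<alpha> < a s} {t\<in>T. \<beta> < b t}) V \<subseteq> Y"
      using sumset_mono[OF sumset_mono order_refl] Y by (rule order_trans) auto
    show "0 < a s - \<alpha>" if "s \<in> {s\<in>S. \<alpha> < a s}" for s using that by simp
    show "0 < b t - \<beta>" if "t \<in> {t\<in>T. \<beta> < b t}" for t using that by simp
  next
    fix y assume "y \<in> Y"
    show "0 \<le> h' y"
    proof (cases "y \<in> sumset (sumset S T) V")
      case True
      then obtain s t v where "s \<in> S" "t \<in> T" "v \<in> V" "y = s + t + v"
        unfolding sumset_sumset_iff by blast
      then show ?thesis
        using True layer[of s t v] geom_mean_nonneg[of "1 / p" "a s - \<alpha>" "b t - \<beta>"]
        by (simp add: h'_def)
    qed (use h_nonneg \<open>y \<in> Y\<close> in \<open>simp add: h'_def\<close>)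
  next
    fix s t v assume "s \<in> {s\<in>S. \<alpha> < a s}" "t \<in> {t\<in>T. \<beta> < b t}" "v \<in> V"
    then have "s \<in> S" "t \<in> T" by auto
    with \<open>v \<in> V\<close> have "s + t + v \<in> sumset (sumset S T) V" unfolding sumset_sumset_iff by blast
    with layer[OF \<open>s \<in> S\<close> \<open>t \<in> T\<close> \<open>v \<in> V\<close>]
    show "geom_mean (1 / p) (a s - \<alpha>) (b t - \<beta>) \<le> h' (s + t + v)"
      by (simp add: h'_def)
  qed
qed

lemma dominated_weights_peel:
  fixes V Y :: "'a::ab_group_add set"
  assumes p: "1 < p" and "finite Y" and dom: "dominated_weights p V S a T b Y h"
    and "S \<noteq> {}" "T \<noteq> {}"
  obtains c S' a' T' b' h' where "c \<le> 1" "card S' + card T' < card S + card T"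
    "dominated_weights p V S' a' T' b' Y h'"
    "sum a' S' = (1 - c) * sum a S" "sum b' T' = (1 - c) * sum b T"
    "c * (beta p V * geom_mean (1 / p) (sum a S) (sum b T)) \<le> sum h Y - sum h' Y"
proof -
  from dom have S_T: "finite S" "finite T" and "sumset (sumset S T) V \<subseteq> Y"
    and a_b_pos: "\<forall>s\<in>S. 0 < a s" "\<forall>t\<in>T. 0 < b t"
    unfolding dominated_weights_def by auto
  obtain c where c: "0 < c" "c \<le> 1"
    and lower: "\<forall>s\<in>S. c * sum a S / card S \<le> a s" "\<forall>t\<in>T. c * sum b T / card T \<le> b t"
    and smaller: "card {s\<in>S. c * sum a S / card S < a s} + card {t\<in>T. c * sum b T / card T < b t}
      < card S + card T"
    using exists_balanced_layer[OF S_T(1) \<open>S \<noteq> {}\<close> S_T(2) \<open>T \<noteq> {}\<close> a_b_pos] by blast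
  define \<alpha> \<beta> where "\<alpha> = c * sum a S / card S" and "\<beta> = c * sum b T / card T"
  define Z r where "Z = sumset (sumset S T) V" and "r = geom_mean (1 / p) \<alpha> \<beta>"
  have pos: "0 < sum a S" "0 < sum b T" "0 < real (card S)" "0 < real (card T)"
    using S_T a_b_pos assms(4,5) by (auto intro: sum_pos simp: card_gt_0_iff)
  then have "0 < \<alpha>" "0 < \<beta>" using c by (simp_all add: \<alpha>_def \<beta>_def)
  have "dominated_weights p V {s\<in>S. \<alpha> < a s} (\<lambda>s. a s - \<alpha>) {t\<in>T. \<beta> < b t} (\<lambda>t. b t - \<beta>) Y
      (\<lambda>y. h y - (if y \<in> Z then r else 0))"
    unfolding Z_def r_def using \<open>0 < \<alpha>\<close> \<open>0 < \<beta>\<close> lower[folded \<alpha>_def \<beta>_def]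
    by (intro dominated_weights_remove_layer[OF p dom]) auto
  moreover have "(\<Sum>s\<in>{s\<in>S. \<alpha> < a s}. a s - \<alpha>) = (1 - c) * sum a S"
    "(\<Sum>t\<in>{t\<in>T. \<beta> < b t}. b t - \<beta>) = (1 - c) * sum b T"
    unfolding \<alpha>_def \<beta>_def using S_T \<open>S \<noteq> {}\<close> \<open>T \<noteq> {}\<close> lower
    by (simp_all add: sum_above_scaled_mean)
  moreover have "c * (beta p V * geom_mean (1 / p) (sum a S) (sum b T))
      \<le> sum h Y - (\<Sum>y\<in>Y. h y - (if y \<in> Z then r else 0))"
  proof -
    \<comment> \<open>The levels are proportional to the sums, so the layer is \<open>c\<close> times the whole.\<close>
    have "geom_mean (1 / p) (\<alpha> * card S) (\<beta> * card T) = c * geom_mean (1 / p) (sum a S) (sum b T)"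
      using pos c(1) by (simp add: \<alpha>_def \<beta>_def geom_mean_scale)
    then have "c * (beta p V * geom_mean (1 / p) (sum a S) (sum b T)) \<le> r * card Z"
      using beta_const_weights_le[OF S_T(1) \<open>S \<noteq> {}\<close> S_T(2) \<open>T \<noteq> {}\<close>, of \<alpha> \<beta> p V]
        \<open>0 < \<alpha>\<close> \<open>0 < \<beta>\<close> by (simp add: r_def Z_def mult.left_commute)
    also have "\<dots> = sum h Y - (\<Sum>y\<in>Y. h y - (if y \<in> Z then r else 0))"
      using sum_minus_indicator[OF \<open>finite Y\<close>, of Z h r] \<open>sumset (sumset S T) V \<subseteq> Y\<close>
      by (simp add: Z_def)
    finally show ?thesis .
  qed
  moreover have "card {s\<in>S. \<alpha> < a s} + card {t\<in>T. \<beta> < b t} < card S + card T"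
    using smaller by (simp add: \<alpha>_def \<beta>_def)
  ultimately show thesis by (intro that[OF c(2)])
qed

lemma beta_weighted_le:
  fixes V Y :: "'a::ab_group_add set"
  assumes p: "1 < p" and "finite Y" and "dominated_weights p V S a T b Y h"
  shows "beta p V * geom_mean (1 / p) (sum a S) (sum b T) \<le> sum h Y"
  using assms(3)
proof (induction "card S + card T" arbitrary: S a T b h rule: less_induct)
  case less
  show ?case
  proof (cases "S = {} \<or> T = {}")
    case True
    have "0 \<le> sum h Y" using less.prems by (simp add: dominated_weights_def sum_nonneg)
    with True show ?thesis by (auto simp: geom_mean_def)
  next
    case False
    then have "S \<noteq> {}" "T \<noteq> {}" by auto
    obtain c S' a' T' b' h' where "c \<le> 1" and smaller: "card S' + card T' < card S + card T"
      and dom: "dominated_weights p V S' a' T' b' Y h'"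
      and sums: "sum a' S' = (1 - c) * sum a S" "sum b' T' = (1 - c) * sum b T"
      and layer: "c * (beta p V * geom_mean (1 / p) (sum a S) (sum b T)) \<le> sum h Y - sum h' Y"
      by (rule dominated_weights_peel[OF p \<open>finite Y\<close> less.prems \<open>S \<noteq> {}\<close> \<open>T \<noteq> {}\<close>])
    have "(1 - c) * (beta p V * geom_mean (1 / p) (sum a S) (sum b T)) \<le> sum h' Y"
      using less.hyps[OF smaller dom] \<open>c \<le> 1\<close> by (simp add: sums geom_mean_scale mult.left_commute)
    with layer show ?thesis by (simp add: algebra_simps)
  qed
qed

definition fibre :: "('a \<times> 'b) set \<Rightarrow> 'b \<Rightarrow> 'a set" where
  "fibre X y = {x. (x, y) \<in> X}"

lemma finite_fibre:
  assumes "finite X"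
  shows "finite (fibre X y)"
proof -
  have "fibre X y = fst ` (X \<inter> {z. snd z = y})" by (force simp: fibre_def)
  then show ?thesis using assms by simp
qed

lemma fibre_nonempty: "y \<in> snd ` X \<Longrightarrow> fibre X y \<noteq> {}"
  by (force simp: fibre_def)

lemma card_eq_sum_card_fibre:
  assumes "finite X" "finite Y" "snd ` X \<subseteq> Y"
  shows "card X = (\<Sum>y\<in>Y. card (fibre X y))"
proof -
  have "X = (\<Union>y\<in>Y. (\<lambda>x. (x, y)) ` fibre X y)"
    using assms(3) by (force simp: fibre_def)
  also have "card \<dots> = (\<Sum>y\<in>Y. card ((\<lambda>x. (x, y)) ` fibre X y))"
    using assms(1,2) by (intro card_UN_disjoint) (auto simp: finite_fibre)
  also have "\<dots> = (\<Sum>y\<in>Y. card (fibre X y))"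
    by (intro sum.cong) (auto simp: card_image inj_on_def)
  finally show ?thesis .
qed

lemma sumset_fibre_subset:
  "v \<in> V2 \<Longrightarrow> sumset (sumset (fibre A s) (fibre B t)) V1
     \<subseteq> fibre (sumset (sumset A B) (V1 \<times> V2)) (s + t + v)"
  unfolding sumset_def fibre_def by force

lemma beta_mult_le_beta_Times:
  fixes V1 :: "'a::ab_group_add set" and V2 :: "'b::ab_group_add set"
  assumes p: "1 < p" and fin: "finite V1" "finite V2"
  shows "beta p V1 * beta p V2 \<le> beta p (V1 \<times> V2)"
proof (cases "beta p V1 = 0")
  case True
  then show ?thesis by (simp add: beta_nonneg)
next
  case False
  then have beta1: "0 < beta p V1" using beta_nonneg[of p V1] by simp
  show ?thesis
  proof (rule le_betaI)
    fix A B :: "('a \<times> 'b) set"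
    assume A: "finite A" "A \<noteq> {}" and B: "finite B" "B \<noteq> {}"
    define C where "C = sumset (sumset A B) (V1 \<times> V2)"
    \<comment> \<open>The union spares a proof of \<open>V\<^sub>1 \<noteq> {}\<close>, which \<open>snd ` C\<close> alone would need.\<close>
    define Y where "Y = snd ` C \<union> sumset (sumset (snd ` A) (snd ` B)) V2"
    have "finite C" using A B fin by (simp add: C_def finite_sumset)
    then have "finite Y" using A B fin by (simp add: Y_def finite_sumset)
    have "beta p V2 * geom_mean (1 / p) (\<Sum>s\<in>snd ` A. beta p V1 * card (fibre A s))
        (\<Sum>t\<in>snd ` B. beta p V1 * card (fibre B t)) \<le> (\<Sum>y\<in>Y. real (card (fibre C y)))"
    proof (rule beta_weighted_le[OF p \<open>finite Y\<close>], unfold dominated_weights_def, intro conjI ballI)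
      fix s t v assume "s \<in> snd ` A" "t \<in> snd ` B" "v \<in> V2"
      then have "beta p V1 * geom_mean (1 / p) (card (fibre A s)) (card (fibre B t))
          \<le> card (sumset (sumset (fibre A s) (fibre B t)) V1)"
        using A B by (intro beta_mult_geom_mean_le_card finite_fibre fibre_nonempty)
      also have "\<dots> \<le> card (fibre C (s + t + v))"
        using sumset_fibre_subset[OF \<open>v \<in> V2\<close>] \<open>finite C\<close>
        by (intro of_nat_mono card_mono finite_fibre) (simp_all add: C_def)
      finally show "geom_mean (1 / p) (beta p V1 * card (fibre A s)) (beta p V1 * card (fibre B t))
          \<le> card (fibre C (s + t + v))"
        using beta1 by (simp add: geom_mean_scale)
    qed (use A B beta1 \<open>finite Y\<close> in
      \<open>auto simp: Y_def card_gt_0_iff finite_fibre fibre_nonempty\<close>)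
    moreover have "card A = (\<Sum>s\<in>snd ` A. card (fibre A s))"
      "card B = (\<Sum>t\<in>snd ` B. card (fibre B t))" "card C = (\<Sum>y\<in>Y. card (fibre C y))"
      using A B \<open>finite C\<close> \<open>finite Y\<close> by (auto simp: Y_def intro!: card_eq_sum_card_fibre)
    ultimately show "beta p V1 * beta p V2 * geom_mean (1 / p) (card A) (card B)
        \<le> card (sumset (sumset A B) (V1 \<times> V2))"
      using beta1 by (simp add: C_def geom_mean_scale mult_ac flip: sum_distrib_left of_nat_sum)
  qed
qed

theorem mainTheorem7:
  fixes V1 :: "'a::ab_group_add set" and V2 :: "'b::ab_group_add set" and p :: real
  assumes "finite V1" and "finite V2" and "1 < p"
  shows "beta p (V1 \<times> V2) = beta p V1 * beta p V2"
  using beta_Times_le beta_mult_le_beta_Times[OF assms(3,1,2)] by (rule antisym)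

end
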